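(* If a topological space $X$ is the union $X=Y\cup Z$ of two subspaces $Y$ and $Z$ which are both $NWD$-separable, then $X$ is $NWD$-separable.
   Context: A space $X$ is $NWD$-separable if for every sequence $\{D_n:n<\omega\}$ of dense subsets of $X$ there are nowhere dense (in $X$) sets $E_n\subseteq D_n$ such that $\bigcup_{n<\omega}E_n$ is dense in $X$. *)

theory Defs
  imports "HOL-Analysis.Analysis"
begin

definition dense_in :: "'a topology \<Rightarrow> 'a set \<Rightarrow> bool" where
  "dense_in X D \<longleftrightarrow> D \<subseteq> topspace X \<and> X closure_of D = topspace X"

definition nowhere_dense_in :: "'a topology \<Rightarrow> 'a set \<Rightarrow> bool" where
  "nowhere_dense_in X E \<longleftrightarrow> E \<subseteq> topspace X \<and> X interior_of (X closure_of E) = {}"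

definition NWD_separable :: "'a topology \<Rightarrow> bool" where
  "NWD_separable X \<longleftrightarrow>
     (\<forall>D :: nat \<Rightarrow> 'a set. (\<forall>n. dense_in X (D n)) \<longrightarrow>
        (\<exists>E :: nat \<Rightarrow> 'a set. (\<forall>n. E n \<subseteq> D n \<and> nowhere_dense_in X (E n))
                      \<and> dense_in X (\<Union>n. E n)))"

end

theory Submission
  imports Defs
begin

text \<open>
  Let \<open>W n\<close> be the open set of points having a neighbourhood that misses \<open>D n \<inter> Z\<close>; as
  \<open>X = Y \<union> Z\<close>, the set \<open>D n \<inter> Y\<close> is dense in \<open>W n\<close>. Near the points where infinitely many
  \<open>W n\<close> accumulate, the NWD-separability of \<open>Y\<close> yields nowhere dense pieces of the \<open>D n\<close>
  with dense union. On the open remainder a whole tail of the \<open>W n\<close> is absent, so there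
  \<open>D n \<inter> Z\<close> is dense for all large \<open>n\<close> and \<open>Z\<close> supplies the pieces. Sets nowhere dense in a
  subspace are nowhere dense in \<open>X\<close>.
\<close>

lemma nowhere_dense_in_iff:
  "nowhere_dense_in X E \<longleftrightarrow>
     E \<subseteq> topspace X \<and> (\<forall>U. openin X U \<and> U \<subseteq> X closure_of E \<longrightarrow> U = {})"
  unfolding nowhere_dense_in_def
  by (metis interior_of_maximal interior_of_subset openin_interior_of subset_empty)

lemma nowhere_dense_in_subset:
  "\<lbrakk>nowhere_dense_in X E; F \<subseteq> E\<rbrakk> \<Longrightarrow> nowhere_dense_in X F"
  unfolding nowhere_dense_in_iff by (metis closure_of_mono order_trans)

lemma nowhere_dense_in_Un:
  assumes "nowhere_dense_in X A" "nowhere_dense_in X B"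
  shows "nowhere_dense_in X (A \<union> B)"
proof -
  have "U = {}" if U: "openin X U" "U \<subseteq> X closure_of (A \<union> B)" for U
  proof -
    have "openin X (U - X closure_of A)" "U - X closure_of A \<subseteq> X closure_of B"
      using U by (auto simp: openin_diff)
    then have "U \<subseteq> X closure_of A"
      using assms(2) unfolding nowhere_dense_in_iff by blast
    then show ?thesis
      using U(1) assms(1) unfolding nowhere_dense_in_iff by blast
  qed
  then show ?thesis
    using assms unfolding nowhere_dense_in_iff by auto
qed

lemma nowhere_dense_in_UN_atMost:
  assumes "\<And>n. nowhere_dense_in X (F n)"
  shows "nowhere_dense_in X (\<Union>n\<le>(m::nat). F n)"
proof (induction m)
  case 0
  then show ?case using assms by simp
next
  case (Suc m)
  then show ?case
    using nowhere_dense_in_Un[OF Suc assms] by (simp add: atMost_Suc Un_commute)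
qed

lemma nowhere_dense_in_from_subtopology:
  assumes "nowhere_dense_in (subtopology X S) E"
  shows "nowhere_dense_in X E"
proof -
  have ES: "E \<subseteq> S \<inter> topspace X"
    using assms unfolding nowhere_dense_in_iff by auto
  have "U = {}" if U: "openin X U" "U \<subseteq> X closure_of E" for U
  proof -
    have "openin (subtopology X S) (U \<inter> S)"
      using U(1) by (simp add: openin_subtopology_Int)
    moreover have "U \<inter> S \<subseteq> subtopology X S closure_of E"
      using U(2) ES by (auto simp: closure_of_subtopology Int_absorb1)
    ultimately have "U \<inter> E = {}"
      using assms ES unfolding nowhere_dense_in_iff by blast
    then show ?thesis
      using U openin_Int_closure_of_eq_empty[OF U(1)] by blast
  qed
  then show ?thesis
    using ES unfolding nowhere_dense_in_iff by blast
qed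

lemma dense_in_subtopology:
  assumes "S \<subseteq> topspace X"
  shows "dense_in (subtopology X S) A \<longleftrightarrow> A \<subseteq> S \<and> S \<subseteq> X closure_of A"
  using assms by (auto simp: dense_in_def closure_of_subtopology Int_absorb1 Int_absorb2)

lemma dense_in_iff_meets_open:
  "dense_in X A \<longleftrightarrow> A \<subseteq> topspace X \<and> (\<forall>V. openin X V \<and> V \<noteq> {} \<longrightarrow> V \<inter> A \<noteq> {})"
  unfolding dense_in_def dense_intersects_open by blast

definition limsup_closure :: "'a topology \<Rightarrow> (nat \<Rightarrow> 'a set) \<Rightarrow> 'a set" where
  "limsup_closure X W = (\<Inter>n. X closure_of (\<Union>m\<in>{n..}. W m))"

lemma dense_in_subtopology_patch:
  assumes S: "S \<subseteq> topspace X"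
    and W: "\<And>i. i \<in> I \<Longrightarrow> openin X (W i) \<and> W i \<subseteq> X closure_of (A i) \<and> A i \<subseteq> S"
  shows "dense_in (subtopology X S)
           ((\<Union>i\<in>I. A i \<inter> W i) \<union> (S - X closure_of (\<Union>i\<in>I. W i)))"
    (is "dense_in _ ?P")
proof -
  have "W i \<subseteq> X closure_of ?P" if "i \<in> I" for i
  proof -
    have "W i \<subseteq> X closure_of (W i \<inter> A i)"
      using W[OF that] openin_Int_closure_of_subset[of X "W i" "A i"] by blast
    also have "\<dots> \<subseteq> X closure_of ?P"
      using that by (intro closure_of_mono) blast
    finally show ?thesis .
  qed
  then have "X closure_of (\<Union>i\<in>I. W i) \<subseteq> X closure_of ?P"
    by (meson UN_least closedin_closure_of closure_of_minimal)
  moreover have "S - X closure_of (\<Union>i\<in>I. W i) \<subseteq> X closure_of ?P"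
    using S closure_of_subset[of ?P X] W by blast
  ultimately have "S \<subseteq> X closure_of ?P"
    by blast
  moreover have "?P \<subseteq> S"
    using W by blast
  ultimately show ?thesis
    unfolding dense_in_subtopology[OF S] by blast
qed

text \<open>
  \<open>S\<close> is fed the points of \<open>D m \<inter> W m\<close>, \<open>m \<ge> n\<close>, patched to a dense subset of \<open>S\<close>. A point
  of the resulting \<open>E' n\<close> near the limsup lies in some \<open>D m \<inter> W m\<close> with \<open>m \<ge> n\<close>, and collecting
  only the finitely many \<open>E' n\<close> with \<open>n \<le> m\<close> into \<open>E m\<close> keeps it nowhere dense.
\<close>
lemma NWD_separable_subtopology_limsup_closure:
  fixes W D :: "nat \<Rightarrow> 'a set"
  assumes nwd: "NWD_separable (subtopology X S)" and S: "S \<subseteq> topspace X"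
    and W_open: "\<And>m. openin X (W m)" and W_sub: "\<And>m. W m \<subseteq> X closure_of (D m \<inter> S)"
  obtains E where "\<And>m. E m \<subseteq> D m" "\<And>m. nowhere_dense_in X (E m)"
    and "\<And>V. \<lbrakk>openin X V; V \<noteq> {}; V \<subseteq> limsup_closure X W\<rbrakk> \<Longrightarrow> V \<inter> (\<Union>m. E m) \<noteq> {}"
proof -
  define D' where "D' n = (\<Union>m\<in>{n..}. (D m \<inter> S) \<inter> W m) \<union> (S - X closure_of (\<Union>m\<in>{n..}. W m))"
    for n
  have "\<forall>n. dense_in (subtopology X S) (D' n)"
    unfolding D'_def using S W_open W_sub by (intro allI dense_in_subtopology_patch) auto
  then obtain E' where E': "\<forall>n. E' n \<subseteq> D' n \<and> nowhere_dense_in (subtopology X S) (E' n)"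
    and E'_dense: "dense_in (subtopology X S) (\<Union>n. E' n)"
    using nwd unfolding NWD_separable_def by blast
  have E'_sub: "E' n \<subseteq> D' n" and E'_nwd: "nowhere_dense_in (subtopology X S) (E' n)" for n
    using E' by blast+
  define E where "E m = (\<Union>n\<le>m. E' n) \<inter> D m \<inter> W m" for m
  show thesis
  proof
    show "E m \<subseteq> D m" for m
      unfolding E_def by blast
    show "nowhere_dense_in X (E m)" for m
    proof -
      have "nowhere_dense_in X (\<Union>n\<le>m. E' n)"
        using nowhere_dense_in_from_subtopology[OF E'_nwd] by (rule nowhere_dense_in_UN_atMost)
      then show ?thesis
        unfolding E_def by (rule nowhere_dense_in_subset) blast
    qed
  next
    fix V assume V: "openin X V" "V \<noteq> {}" "V \<subseteq> limsup_closure X W"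
    have "V \<inter> S \<noteq> {}"
    proof -
      have "V \<inter> X closure_of (\<Union>m\<in>{0..}. W m) \<noteq> {}"
        using V unfolding limsup_closure_def by blast
      then obtain m where "V \<inter> W m \<noteq> {}"
        using openin_Int_closure_of_eq_empty[OF V(1)] by blast
      then have "(V \<inter> W m) \<inter> X closure_of (D m \<inter> S) \<noteq> {}"
        using W_sub by blast
      then show ?thesis
        using openin_Int_closure_of_eq_empty[OF openin_Int[OF V(1) W_open]] by blast
    qed
    moreover have "openin (subtopology X S) (V \<inter> S)"
      using V(1) by (simp add: openin_subtopology_Int)
    ultimately obtain x n where x: "x \<in> E' n" "x \<in> V"
      using E'_dense unfolding dense_in_iff_meets_open by blast
    then have "x \<in> X closure_of (\<Union>m\<in>{n..}. W m)"
      using V(3) unfolding limsup_closure_def by blast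
    then obtain m where "m \<ge> n" "x \<in> D m" "x \<in> W m"
      using x E'_sub[of n] unfolding D'_def by auto
    then have "x \<in> E m"
      using x unfolding E_def by auto
    then show "V \<inter> (\<Union>m. E m) \<noteq> {}"
      using x by blast
  qed
qed

lemma open_diff_limsup_closure:
  assumes V: "openin X V" "\<not> V \<subseteq> limsup_closure X W"
    and W_open: "\<And>m. openin X (W m)"
  obtains V' where "openin X V'" "V' \<noteq> {}" "V' \<subseteq> V"
    "V' \<subseteq> limsup_closure X (\<lambda>m. topspace X - X closure_of W m)"
proof -
  obtain N where N: "\<not> V \<subseteq> X closure_of (\<Union>m\<in>{N..}. W m)"
    using V(2) unfolding limsup_closure_def by blast
  define V' where "V' = V - X closure_of (\<Union>m\<in>{N..}. W m)"
  have V'_open: "openin X V'"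
    unfolding V'_def using V(1) by (simp add: openin_diff)
  have V'_sub: "V' \<subseteq> topspace X - X closure_of W m" if "m \<ge> N" for m
  proof -
    have "W m \<subseteq> X closure_of (\<Union>m\<in>{N..}. W m)"
      using that W_open openin_subset
      by (intro order_trans[OF _ closure_of_subset]) auto
    then have "V' \<inter> W m = {}"
      unfolding V'_def by blast
    then show ?thesis
      using openin_Int_closure_of_eq_empty[OF V'_open] openin_subset[OF V'_open] by blast
  qed
  have "V' \<subseteq> X closure_of (\<Union>m\<in>{n..}. topspace X - X closure_of W m)" for n
  proof -
    have "V' \<subseteq> topspace X - X closure_of W (max n N)"
      using V'_sub by simp
    also have "\<dots> \<subseteq> (\<Union>m\<in>{n..}. topspace X - X closure_of W m)"
      by (rule UN_upper) simp
    also have "\<dots> \<subseteq> X closure_of (\<Union>m\<in>{n..}. topspace X - X closure_of W m)"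
      by (rule closure_of_subset) blast
    finally show ?thesis .
  qed
  then have "V' \<subseteq> limsup_closure X (\<lambda>m. topspace X - X closure_of W m)"
    unfolding limsup_closure_def by blast
  moreover have "V' \<noteq> {}" "V' \<subseteq> V"
    using N unfolding V'_def by auto
  ultimately show thesis
    using V'_open that by blast
qed

lemma dense_in_Un_limsup_closure:
  assumes W_open: "\<And>m. openin X (W m)" and "A \<subseteq> topspace X" "B \<subseteq> topspace X"
    and A: "\<And>V. \<lbrakk>openin X V; V \<noteq> {}; V \<subseteq> limsup_closure X W\<rbrakk> \<Longrightarrow> V \<inter> A \<noteq> {}"
    and B: "\<And>V. \<lbrakk>openin X V; V \<noteq> {};
               V \<subseteq> limsup_closure X (\<lambda>m. topspace X - X closure_of W m)\<rbrakk> \<Longrightarrow> V \<inter> B \<noteq> {}"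
  shows "dense_in X (A \<union> B)"
proof -
  have "V \<inter> (A \<union> B) \<noteq> {}" if V: "openin X V" "V \<noteq> {}" for V
  proof (cases "V \<subseteq> limsup_closure X W")
    case True
    then show ?thesis
      using A[OF V True] by blast
  next
    case False
    obtain V' where "openin X V'" "V' \<noteq> {}" "V' \<subseteq> V"
      "V' \<subseteq> limsup_closure X (\<lambda>m. topspace X - X closure_of W m)"
      by (rule open_diff_limsup_closure[OF V(1) False W_open]) blast
    then show ?thesis
      using B[of V'] by blast
  qed
  then show ?thesis
    using assms(2,3) unfolding dense_in_iff_meets_open by blast
qed

lemma dense_in_diff_closure_of_Int:
  assumes "dense_in X D" "topspace X = Y \<union> Z"
  shows "topspace X - X closure_of (D \<inter> Z) \<subseteq> X closure_of (D \<inter> Y)"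
proof -
  have "D = (D \<inter> Y) \<union> (D \<inter> Z)"
    using assms unfolding dense_in_def by blast
  then have "topspace X = X closure_of (D \<inter> Y) \<union> X closure_of (D \<inter> Z)"
    using assms(1) unfolding dense_in_def by (metis closure_of_Un)
  then show ?thesis
    by blast
qed

theorem corollary3p16:
  fixes X :: "'a topology" and Y Z :: "'a set"
  assumes "topspace X = Y \<union> Z"
    and "NWD_separable (subtopology X Y)"
    and "NWD_separable (subtopology X Z)"
  shows "NWD_separable X"
  unfolding NWD_separable_def
proof (intro allI impI)
  fix D :: "nat \<Rightarrow> 'a set"
  assume D: "\<forall>n. dense_in X (D n)"
  have Y_sub: "Y \<subseteq> topspace X" and Z_sub: "Z \<subseteq> topspace X"
    using assms(1) by blast+
  define W where "W m = topspace X - X closure_of (D m \<inter> Z)" for m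
  have W_open: "openin X (W m)" for m
    by (simp add: W_def openin_diff)
  have W_sub: "W m \<subseteq> X closure_of (D m \<inter> Y)" for m
    unfolding W_def using D dense_in_diff_closure_of_Int[OF _ assms(1)] by blast
  have W_compl_open: "openin X (topspace X - X closure_of W m)"
    and W_compl_sub: "topspace X - X closure_of W m \<subseteq> X closure_of (D m \<inter> Z)" for m
    using closure_of_subset[of "W m" X] by (auto simp: openin_diff W_def)
  obtain EY where EY: "\<And>m. EY m \<subseteq> D m" "\<And>m. nowhere_dense_in X (EY m)"
    "\<And>V. \<lbrakk>openin X V; V \<noteq> {}; V \<subseteq> limsup_closure X W\<rbrakk> \<Longrightarrow> V \<inter> (\<Union>m. EY m) \<noteq> {}"
    by (rule NWD_separable_subtopology_limsup_closure[where W=W, OF assms(2) Y_sub W_open W_sub])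
      blast
  obtain EZ where EZ: "\<And>m. EZ m \<subseteq> D m" "\<And>m. nowhere_dense_in X (EZ m)"
    "\<And>V. \<lbrakk>openin X V; V \<noteq> {}; V \<subseteq> limsup_closure X (\<lambda>m. topspace X - X closure_of W m)\<rbrakk>
       \<Longrightarrow> V \<inter> (\<Union>m. EZ m) \<noteq> {}"
    by (rule NWD_separable_subtopology_limsup_closure[where W="\<lambda>m. topspace X - X closure_of W m",
          OF assms(3) Z_sub W_compl_open W_compl_sub])
      blast
  have "(\<Union>m. EY m) \<union> (\<Union>m. EZ m) \<subseteq> topspace X"
    using EY(1) EZ(1) D unfolding dense_in_def by blast
  then have "dense_in X (\<Union>m. EY m \<union> EZ m)"
    using dense_in_Un_limsup_closure[OF W_open _ _ EY(3) EZ(3)] by (simp add: UN_Un_distrib)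
  moreover have "nowhere_dense_in X (EY m \<union> EZ m)" for m
    using EY(2) EZ(2) by (rule nowhere_dense_in_Un)
  ultimately show "\<exists>E. (\<forall>n. E n \<subseteq> D n \<and> nowhere_dense_in X (E n)) \<and> dense_in X (\<Union>n. E n)"
    using EY(1) EZ(1) by (intro exI[of _ "\<lambda>m. EY m \<union> EZ m"]) blast
qed

end
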